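(* Suppose $f(x)=x^m\pm1$, and let $G=(g_{ij})$ be a $k\times l$ matrix over $A$ whose rows $g^{(1)},\ldots,g^{(k)}$ form a basis of divisors of an $A$-code $C$. For each $i$ let $d_i=\deg L_{\mathrm{coef}}(g^{(i)})$ and let $\alpha_i$ be the constant coefficient of $L_{\mathrm{coef}}(g^{(i)})$. Let $G'$ be the $k\times l$ matrix with entries $\alpha_i^{-1}x^{d_i}g_{ij}(x^{-1})$ (computed in $A$, where $x$ is invertible). Then the rows of $G'$ form a basis of divisors of the $A$-code $(C^\perp)^{\perp_{\mathbb{F}}}$.
   Context: Let $\mathbb{F}$ be a finite field, $f(x)\in\mathbb{F}[x]$ monic of degree $m$, $A=\mathbb{F}[x]/\langle f(x)\rangle$, elements identified with polynomials of degree $<m$. An $A$-code of length $l$ is an $A$-submodule of $A^l$; $C^\perp=\{a\in A^l:\sum_ia_ic_i=0\ \forall c\in C\}$. Identify $\sum_{i=0}^{m-1}a_ix^i\in A$ with $(a_0,\ldots,a_{m-1})\in\mathbb{F}^m$ and $A^l$ with $\mathbb{F}^{lm}$ by concatenation; $D^{\perp_{\mathbb{F}}}$ is the dual of $D$ with respect to the standard dot product on $\mathbb{F}^{lm}$, viewed in $A^l$. For $u\in A^l$, $L_{\mathrm{ind}}(u)$ is the smallest index of a nonzero entry ($\infty$ if $u=0$) and $L_{\mathrm{coef}}(u)$ that entry. For nonzero $C$, $L_{\mathrm{ind}}(C)=\min_{u\in C}L_{\mathrm{ind}}(u)$; $L_{\mathrm{coef}}(C)$ is the monic polynomial $g$ of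 minimum degree such that some $c\in C$ has $L_{\mathrm{ind}}(c)=L_{\mathrm{ind}}(C)$ and $L_{\mathrm{coef}}(c)=g$ (such $c$ is a leading element). $C^{(1)}=C$, $C^{(n+1)}=\{c\in C^{(n)}:L_{\mathrm{ind}}(c)>L_{\mathrm{ind}}(C^{(n)})\}$ while $C^{(n)}\ne0$; with $k$ largest such that $C^{(k)}\neq0$, a tuple $(g^{(1)},\ldots,g^{(k)})$ with $g^{(j)}$ a leading element of $C^{(j)}$ is a basis of divisors of $C$. *)

theory Defs
  imports "HOL-Computational_Algebra.Polynomial" "HOL-Library.Extended_Nat"
begin

text \<open>Elements of A = F[x]/(f) are polynomials of degree < deg f; vectors in A^l are
  lists of length l of such polynomials.\<close>

definition Avec :: "'a::field poly \<Rightarrow> nat \<Rightarrow> 'a poly list set" where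
  "Avec f l = {v. length v = l \<and> (\<forall>x\<in>set v. degree x < degree f)}"

definition A_code :: "'a::field poly \<Rightarrow> nat \<Rightarrow> 'a poly list set \<Rightarrow> bool" where
  "A_code f l C \<longleftrightarrow> C \<subseteq> Avec f l \<and> replicate l 0 \<in> C
     \<and> (\<forall>u\<in>C. \<forall>v\<in>C. map2 (+) u v \<in> C)
     \<and> (\<forall>a. degree a < degree f \<longrightarrow> (\<forall>v\<in>C. map (\<lambda>y. (a * y) mod f) v \<in> C))"

definition dual :: "'a::field poly \<Rightarrow> nat \<Rightarrow> 'a poly list set \<Rightarrow> 'a poly list set" where
  "dual f l C = {a \<in> Avec f l. \<forall>c\<in>C. (\<Sum>i<l. a ! i * c ! i) mod f = 0}"

definition Fdual :: "'a::field poly \<Rightarrow> nat \<Rightarrow> 'a poly list set \<Rightarrow> 'a poly list set" where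
  "Fdual f l D = {a \<in> Avec f l. \<forall>c\<in>D.
      (\<Sum>i<l. \<Sum>j<degree f. coeff (a ! i) j * coeff (c ! i) j) = 0}"

definition Lind :: "'a::zero list \<Rightarrow> enat" where
  "Lind u = (if \<exists>i<length u. u ! i \<noteq> 0
             then enat (LEAST i. i < length u \<and> u ! i \<noteq> 0) else \<infinity>)"

definition Lcoef :: "'a::zero list \<Rightarrow> 'a" where
  "Lcoef u = (if \<exists>i<length u. u ! i \<noteq> 0
              then u ! (LEAST i. i < length u \<and> u ! i \<noteq> 0) else 0)"

definition Lind_code :: "'a::zero list set \<Rightarrow> enat" where
  "Lind_code C = (INF u\<in>C. Lind u)"

definition is_Lcoef_code :: "'a::field poly list set \<Rightarrow> 'a poly \<Rightarrow> bool" where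
  "is_Lcoef_code C g \<longleftrightarrow> lead_coeff g = 1
     \<and> (\<exists>c\<in>C. Lind c = Lind_code C \<and> Lcoef c = g)
     \<and> (\<forall>c\<in>C. Lind c = Lind_code C \<and> lead_coeff (Lcoef c) = 1 \<longrightarrow> degree g \<le> degree (Lcoef c))"

definition leading_element :: "'a::field poly list set \<Rightarrow> 'a poly list \<Rightarrow> bool" where
  "leading_element C c \<longleftrightarrow> c \<in> C \<and> Lind c = Lind_code C \<and> is_Lcoef_code C (Lcoef c)"

text \<open>code_seq C n is C^(n+1).\<close>
primrec code_seq :: "'a::zero list set \<Rightarrow> nat \<Rightarrow> 'a list set" where
  "code_seq C 0 = C"
| "code_seq C (Suc n) = {c \<in> code_seq C n. Lind c > Lind_code (code_seq C n)}"

definition nonzero_code :: "'a::zero list set \<Rightarrow> bool" where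
  "nonzero_code C \<longleftrightarrow> (\<exists>c\<in>C. Lind c \<noteq> \<infinity>)"

text \<open>gs ! j is g^(j+1); k = length gs.\<close>
definition basis_of_divisors :: "'a::field poly list set \<Rightarrow> 'a poly list list \<Rightarrow> bool" where
  "basis_of_divisors C gs \<longleftrightarrow>
     (\<forall>j<length gs. nonzero_code (code_seq C j))
     \<and> (\<forall>j\<ge>length gs. \<not> nonzero_code (code_seq C j))
     \<and> (\<forall>j<length gs. leading_element (code_seq C j) (gs ! j))"

definition xinv :: "'a::field poly \<Rightarrow> 'a poly" where
  "xinv f = (THE h. degree h < degree f \<and> ([:0, 1:] * h) mod f = 1)"

definition recip_row :: "'a::field poly \<Rightarrow> 'a poly list \<Rightarrow> 'a poly list" where
  "recip_row f g = (let \<alpha> = coeff (Lcoef g) 0; d = degree (Lcoef g) in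
      map (\<lambda>e. smult (inverse \<alpha>) ((monom 1 d * pcompose e (xinv f)) mod f)) g)"

end

theory Submission
  imports Defs "HOL-Number_Theory.Cong"
begin

text \<open>
  Substituting x^(-1) for x is an involutive ring automorphism \<sigma> of A = F[x]/(x^m \<plusminus> 1), and
  the constant term of a * c is the coordinate inner product of \<sigma>(a) and c. As C is closed under
  multiplication by powers of x, a lies in the A-dual of C iff \<sigma>(a) lies in its F-dual; with
  the double-dual property of F-subspaces this gives Fdual (dual C) = \<sigma>(C). Applied entrywise,
  \<sigma> is injective, so it preserves leading indices and maps C^(j) onto (\<sigma>C)^(j).

  Let g be a leading element of C^(j) with leading coefficient g0 of degree d. Then
  \<alpha> = g0(0) \<noteq> 0, since otherwise x^(-1) g would have a leading coefficient of smaller degree.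
  The transformed row \<alpha>^(-1) x^d \<sigma>(g) = \<sigma>(\<alpha>^(-1) \<sigma>(x^d) g) lies in \<sigma>(C^(j)), and its leading
  coefficient is the monic reversal \<alpha>^(-1) x^d g0(x^(-1)) of g0, of degree d. This degree is
  minimal: if \<sigma>(v) has leading coefficient q, then x^(deg q) v has leading coefficient the
  reversal of q, whose degree is at most deg q.
\<close>

section \<open>Leading indices and leading elements\<close>

lemma Lind_ge_iff: "t \<le> Lind v \<longleftrightarrow> (\<forall>i<length v. v ! i \<noteq> 0 \<longrightarrow> t \<le> enat i)"
proof (cases "\<exists>i<length v. v ! i \<noteq> 0")
  case True
  define k where "k = (LEAST i. i < length v \<and> v ! i \<noteq> 0)"
  have k: "k < length v" "v ! k \<noteq> 0" using LeastI_ex[OF True] by (simp_all add: k_def)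
  have "k \<le> i" if "i < length v" "v ! i \<noteq> 0" for i using that by (simp add: k_def Least_le)
  moreover have "Lind v = enat k" using True by (simp add: Lind_def k_def)
  ultimately show ?thesis using k by (auto intro: order_trans)
qed (auto simp: Lind_def)

lemma Lind_eq_enat_iff: "Lind v = enat i \<longleftrightarrow> i < length v \<and> v ! i \<noteq> 0 \<and> (\<forall>j<i. v ! j = 0)"
proof
  assume L: "Lind v = enat i"
  then have ex: "\<exists>i<length v. v ! i \<noteq> 0" by (auto simp: Lind_def split: if_splits)
  then have "i = (LEAST i. i < length v \<and> v ! i \<noteq> 0)" using L by (simp add: Lind_def)
  then show "i < length v \<and> v ! i \<noteq> 0 \<and> (\<forall>j<i. v ! j = 0)"
    using LeastI_ex[OF ex] not_less_Least[where P="\<lambda>i. i < length v \<and> v ! i \<noteq> 0"]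
    by (metis order.strict_trans)
next
  assume "i < length v \<and> v ! i \<noteq> 0 \<and> (\<forall>j<i. v ! j = 0)"
  moreover from this have "(LEAST i. i < length v \<and> v ! i \<noteq> 0) = i"
    by (intro Least_equality) (auto simp: not_less[symmetric])
  ultimately show "Lind v = enat i" by (auto simp: Lind_def)
qed

lemma Lcoef_eq_nth: "Lind v = enat i \<Longrightarrow> Lcoef v = v ! i"
  by (auto simp: Lind_def Lcoef_def split: if_splits)

lemma
  assumes "\<forall>x\<in>set v. \<phi> x = 0 \<longleftrightarrow> x = 0"
  shows Lind_map_eq: "Lind (map \<phi> v) = Lind v"
    and Lcoef_map_eq: "\<phi> 0 = 0 \<Longrightarrow> Lcoef (map \<phi> v) = \<phi> (Lcoef v)"
proof -
  have nz: "(\<lambda>i. i < length (map \<phi> v) \<and> map \<phi> v ! i \<noteq> 0) = (\<lambda>i. i < length v \<and> v ! i \<noteq> 0)"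
    using assms nth_mem by (fastforce simp: fun_eq_iff)
  then show "Lind (map \<phi> v) = Lind v" unfolding Lind_def by simp
  assume "\<phi> 0 = 0"
  then show "Lcoef (map \<phi> v) = \<phi> (Lcoef v)"
    unfolding Lcoef_def nz by (simp add: LeastI_ex[where P="\<lambda>i. i < length v \<and> v ! i \<noteq> 0"])
qed

lemma Lind_le_Lind_map: "\<phi> 0 = 0 \<Longrightarrow> Lind v \<le> Lind (map \<phi> v)"
  unfolding Lind_ge_iff[of "Lind v" "map \<phi> v"]
  by (metis Lind_ge_iff length_map nth_map order_refl)

lemma Lind_code_le: "c \<in> X \<Longrightarrow> Lind_code X \<le> Lind c"
  by (simp add: Lind_code_def INF_lower)

lemma Lind_code_eq_enat:
  assumes "nonzero_code X"
  obtains p where "Lind_code X = enat p"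
  using assms Lind_code_le by (fastforce simp: nonzero_code_def)

lemma code_seq_subset: "code_seq C j \<subseteq> C"
  by (induct j) auto

definition A_mult_closed :: "'a::field poly \<Rightarrow> 'a poly list set \<Rightarrow> bool" where
  "A_mult_closed f Y \<longleftrightarrow>
     (\<forall>a v. degree a < degree f \<longrightarrow> v \<in> Y \<longrightarrow> map (\<lambda>y. (a * y) mod f) v \<in> Y)"

lemma A_code_imp_A_mult_closed: "A_code f l C \<Longrightarrow> A_mult_closed f C"
  by (simp add: A_code_def A_mult_closed_def)

lemma A_mult_closed_code_seq: "A_mult_closed f C \<Longrightarrow> A_mult_closed f (code_seq C j)"
proof (induct j)
  case (Suc j)
  then show ?case
    unfolding A_mult_closed_def code_seq.simps
    using Lind_le_Lind_map[of "\<lambda>y. (_ * y) mod f"] by (fastforce intro: less_le_trans)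
qed simp

lemma Avec_nth: "v \<in> Avec f l \<Longrightarrow> i < l \<Longrightarrow> degree (v ! i) < degree f"
  unfolding Avec_def using nth_mem by blast

lemma Lind_eq_Lind_code_iff:
  assumes "c \<in> Y" and "Lind_code Y = enat p" and "p < length c"
  shows "Lind c = enat p \<longleftrightarrow> c ! p \<noteq> 0"
proof -
  have "\<forall>i<length c. c ! i \<noteq> 0 \<longrightarrow> p \<le> i"
    using Lind_code_le[OF assms(1)] assms(2) Lind_ge_iff[of "enat p" c] by auto
  then show ?thesis using assms(3) by (metis Lind_eq_enat_iff leD order.strict_trans)
qed

lemma degree_Lcoef_leading_element_le:
  assumes Y: "Y \<subseteq> Avec f l" "A_mult_closed f Y" and g: "leading_element Y g"
    and p: "Lind_code Y = enat p" and v: "v \<in> Y" "v ! p \<noteq> 0"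
  shows "degree (Lcoef g) \<le> degree (v ! p)"
proof -
  have "length g = l" "length v = l" using Y g v by (auto simp: leading_element_def Avec_def)
  moreover have "Lind g = enat p" using g p by (simp add: leading_element_def)
  ultimately have "p < l" by (simp add: Lind_eq_enat_iff)
  with v Y have deg_vp: "degree (v ! p) < degree f" using Avec_nth by blast
  define a where "a = inverse (lead_coeff (v ! p))"
  define w where "w = map (\<lambda>y. ([:a:] * y) mod f) v"
  have "degree [:a:] < degree f" using deg_vp by simp
  then have "w \<in> Y" using Y(2) v(1) unfolding A_mult_closed_def w_def by blast
  moreover have wp: "w ! p = smult a (v ! p)"
    using \<open>p < l\<close> \<open>length v = l\<close> deg_vp
    by (simp add: w_def mod_poly_less le_less_trans[OF degree_smult_le])
  moreover have "w ! p \<noteq> 0" using v(2) by (simp add: wp a_def)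
  ultimately have "Lind w = enat p"
    using Lind_eq_Lind_code_iff[OF _ p] \<open>p < l\<close> \<open>length v = l\<close> by (simp add: w_def)
  moreover have "Lcoef w = smult a (v ! p)" using Lcoef_eq_nth[OF \<open>Lind w = enat p\<close>] wp by simp
  moreover have "lead_coeff (smult a (v ! p)) = 1" using v(2) by (simp add: a_def lead_coeff_smult)
  moreover have "\<forall>c\<in>Y. Lind c = Lind_code Y \<and> lead_coeff (Lcoef c) = 1
      \<longrightarrow> degree (Lcoef g) \<le> degree (Lcoef c)"
    using g by (simp add: leading_element_def is_Lcoef_code_def)
  ultimately have "degree (Lcoef g) \<le> degree (smult a (v ! p))" using \<open>w \<in> Y\<close> p by metis
  then show ?thesis using v(2) by (simp add: a_def)
qed

section \<open>Double annihilators in finite-dimensional coordinate spaces\<close>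

definition lin_subspace :: "('i \<Rightarrow> 'a::field) set \<Rightarrow> bool" where
  "lin_subspace V \<longleftrightarrow> (\<lambda>_. 0) \<in> V \<and> (\<forall>u\<in>V. \<forall>v\<in>V. (\<lambda>i. u i + v i) \<in> V)
     \<and> (\<forall>c. \<forall>v\<in>V. (\<lambda>i. c * v i) \<in> V)"

lemma lin_subspace_combine:
  "lin_subspace V \<Longrightarrow> u \<in> V \<Longrightarrow> v \<in> V \<Longrightarrow> (\<lambda>i. u i + c * v i) \<in> V"
  by (simp add: lin_subspace_def)

text \<open>Either p x = 1, or every vector of V and also b vanish at x.\<close>

lemma lin_subspace_pivot:
  fixes V :: "('i \<Rightarrow> 'a::field) set"
  assumes "finite J" and "x \<in> J" and V: "lin_subspace V"
    and b: "\<forall>w. (\<forall>v\<in>V. (\<Sum>i\<in>J. w i * v i) = 0) \<longrightarrow> (\<Sum>i\<in>J. w i * b i) = 0"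
  obtains p where "p \<in> V" and "\<forall>v\<in>V. v x * p x = v x" and "b x * p x = b x"
proof (cases "\<exists>v\<in>V. v x \<noteq> 0")
  case True
  then obtain v where "v \<in> V" "v x \<noteq> 0" by blast
  with lin_subspace_combine[OF V _ \<open>v \<in> V\<close>, of "\<lambda>_. 0" "inverse (v x)"] V
  show ?thesis by (intro that[of "\<lambda>i. inverse (v x) * v i"]) (auto simp: lin_subspace_def)
next
  case False
  define e where "e = (\<lambda>i. if i = x then 1 else (0::'a))"
  have "(\<Sum>i\<in>J. e i * v i) = (\<Sum>i\<in>J. if i = x then v i else 0)" for v
    by (rule sum.cong) (simp_all add: e_def)
  then have "(\<Sum>i\<in>J. e i * v i) = v x" for v using assms(1,2) by simp
  then have "b x = 0" using b[rule_format, of e] False by simp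
  with False V show ?thesis by (intro that[of "\<lambda>_. 0"]) (auto simp: lin_subspace_def)
qed

lemma mem_lin_subspace_if_annihilated:
  fixes V :: "('i \<Rightarrow> 'a::field) set"
  assumes "finite I" and "lin_subspace V" and "\<forall>v\<in>V. \<forall>i. i \<notin> I \<longrightarrow> v i = 0"
    and "\<forall>i. i \<notin> I \<longrightarrow> b i = 0"
    and "\<forall>w. (\<forall>v\<in>V. (\<Sum>i\<in>I. w i * v i) = 0) \<longrightarrow> (\<Sum>i\<in>I. w i * b i) = 0"
  shows "b \<in> V"
  using assms
proof (induct I arbitrary: V b rule: finite_induct)
  case empty
  then have "b = (\<lambda>_. 0)" by auto
  with empty show ?case by (simp add: lin_subspace_def)
next
  case (insert x I)
  note V = \<open>lin_subspace V\<close> and Vsupp = insert.prems(2) and bsupp = insert.prems(3)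
    and b_annih = insert.prems(4)
  obtain p where p: "p \<in> V" "\<forall>v\<in>V. v x * p x = v x" "b x * p x = b x"
    using lin_subspace_pivot[OF _ _ V b_annih] insert.hyps(1) by blast
  define V0 where "V0 = {v \<in> V. v x = 0}"
  have V0: "lin_subspace V0" using V by (simp add: lin_subspace_def V0_def)
  have V0supp: "\<forall>v\<in>V0. \<forall>i. i \<notin> I \<longrightarrow> v i = 0" using Vsupp by (auto simp: V0_def)
  have reduce: "(\<lambda>i. v i - v x * p i) \<in> V0" if "v \<in> V" for v
    using lin_subspace_combine[OF V that p(1), of "- v x"] p(2) that by (auto simp: V0_def)
  define b' where "b' = (\<lambda>i. b i - b x * p i)"
  have "b' \<in> V0"
  proof (rule insert.hyps(3)[OF V0 V0supp])
    show "\<forall>i. i \<notin> I \<longrightarrow> b' i = 0"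
    proof (intro allI impI)
      fix i assume "i \<notin> I"
      then show "b' i = 0" using bsupp Vsupp p by (cases "i = x") (auto simp: b'_def)
    qed
    show "\<forall>w. (\<forall>v\<in>V0. (\<Sum>i\<in>I. w i * v i) = 0) \<longrightarrow> (\<Sum>i\<in>I. w i * b' i) = 0"
    proof (intro allI impI)
      fix w assume w: "\<forall>v\<in>V0. (\<Sum>i\<in>I. w i * v i) = 0"
      define w' where "w' = w(x := - (\<Sum>i\<in>I. w i * p i))"
      have w': "(\<Sum>i\<in>insert x I. w' i * v i) = (\<Sum>i\<in>I. w i * (v i - v x * p i))" for v
      proof -
        have "(\<Sum>i\<in>I. w' i * v i) = (\<Sum>i\<in>I. w i * v i)"
          using insert.hyps by (intro sum.cong) (auto simp: w'_def)
        then show ?thesis using insert.hyps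
          by (simp add: w'_def algebra_simps sum_subtractf sum_distrib_left)
      qed
      have "\<forall>v\<in>V. (\<Sum>i\<in>insert x I. w' i * v i) = 0" using w reduce by (simp add: w')
      then have "(\<Sum>i\<in>insert x I. w' i * b i) = 0" using b_annih by blast
      then show "(\<Sum>i\<in>I. w i * b' i) = 0" by (simp add: w' b'_def)
    qed
  qed
  then show ?case using lin_subspace_combine[OF V _ p(1), of b' "b x"] by (simp add: V0_def b'_def)
qed

section \<open>The coordinate dual of an A-code\<close>

definition coeff_inner :: "'a::field poly \<Rightarrow> nat \<Rightarrow> 'a poly list \<Rightarrow> 'a poly list \<Rightarrow> 'a" where
  "coeff_inner f l a c = (\<Sum>i<l. \<Sum>j<degree f. coeff (a ! i) j * coeff (c ! i) j)"

lemma coeff_inner_commute: "coeff_inner f l a c = coeff_inner f l c a"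
  by (simp add: coeff_inner_def mult.commute)

lemma Fdual_eq: "Fdual f l D = {a \<in> Avec f l. \<forall>c\<in>D. coeff_inner f l a c = 0}"
  by (simp add: Fdual_def coeff_inner_def)

definition coeff_table :: "'a::zero poly \<Rightarrow> nat \<Rightarrow> 'a poly list \<Rightarrow> nat \<times> nat \<Rightarrow> 'a" where
  "coeff_table f l v = (\<lambda>(i, j). if i < l \<and> j < degree f then coeff (v ! i) j else 0)"

definition table_vec :: "'a::comm_monoid_add poly \<Rightarrow> nat \<Rightarrow> (nat \<times> nat \<Rightarrow> 'a) \<Rightarrow> 'a poly list" where
  "table_vec f l w = map (\<lambda>i. \<Sum>j<degree f. monom (w (i, j)) j) [0..<l]"

lemma coeff_inner_eq_sum_coeff_table:
  "coeff_inner f l a c = (\<Sum>q\<in>{..<l} \<times> {..<degree f}. coeff_table f l a q * coeff_table f l c q)"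
  unfolding coeff_inner_def sum.cartesian_product by (rule sum.cong) (auto simp: coeff_table_def)

lemma coeff_table_inj:
  assumes "a \<in> Avec f l" "c \<in> Avec f l" "coeff_table f l a = coeff_table f l c"
  shows "a = c"
proof (rule nth_equalityI)
  show "length a = length c" using assms by (simp add: Avec_def)
  fix i assume "i < length a"
  then have i: "i < l" using assms by (simp add: Avec_def)
  show "a ! i = c ! i"
  proof (rule poly_eqI)
    fix j
    show "coeff (a ! i) j = coeff (c ! i) j"
      using fun_cong[OF assms(3), of "(i, j)"] i Avec_nth[OF assms(1) i] Avec_nth[OF assms(2) i]
      by (cases "j < degree f") (simp_all add: coeff_table_def coeff_eq_0)
  qed
qed

lemma table_vec_Avec:
  assumes "0 < degree f" shows "table_vec f l w \<in> Avec f l"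
proof -
  have "degree (\<Sum>j<degree f. monom (w (i, j)) j) < degree f" for i
  proof -
    have "degree (\<Sum>j<degree f. monom (w (i, j)) j) \<le> degree f - 1"
      by (intro degree_sum_le) (auto intro: order_trans[OF degree_monom_le])
    with assms show ?thesis by linarith
  qed
  then show ?thesis unfolding Avec_def table_vec_def by auto
qed

lemma coeff_table_table_vec:
  "q \<in> {..<l} \<times> {..<degree f} \<Longrightarrow> coeff_table f l (table_vec f l w) q = w q"
  by (auto simp: coeff_table_def table_vec_def coeff_sum coeff_monom)

lemma lin_subspace_coeff_table_image:
  assumes "0 < degree f" and C: "A_code f l C"
  shows "lin_subspace (coeff_table f l ` C)"
  unfolding lin_subspace_def
proof (intro conjI ballI allI)
  have C_Avec: "C \<subseteq> Avec f l" using C by (simp add: A_code_def)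
  then have len: "length v = l" if "v \<in> C" for v
    using that unfolding Avec_def by blast
  have "coeff_table f l (replicate l 0) = (\<lambda>_. 0)" by (auto simp: coeff_table_def)
  moreover have "replicate l 0 \<in> C" using C by (simp add: A_code_def)
  ultimately show "(\<lambda>_. 0) \<in> coeff_table f l ` C" by (rule image_eqI[OF sym])
  fix u v assume "u \<in> coeff_table f l ` C" "v \<in> coeff_table f l ` C"
  then obtain u' v' where uv: "u' \<in> C" "v' \<in> C" "u = coeff_table f l u'" "v = coeff_table f l v'"
    by blast
  have "coeff_table f l (map2 (+) u' v') = (\<lambda>q. u q + v q)"
  proof
    fix q :: "nat \<times> nat"
    show "coeff_table f l (map2 (+) u' v') q = u q + v q"
      using len[OF uv(1)] len[OF uv(2)] by (cases q) (simp add: uv(3,4) coeff_table_def)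
  qed
  moreover have "map2 (+) u' v' \<in> C" using C uv by (simp add: A_code_def)
  ultimately show "(\<lambda>q. u q + v q) \<in> coeff_table f l ` C" by (rule image_eqI[OF sym])
next
  fix c v assume "v \<in> coeff_table f l ` C"
  then obtain v' where v': "v' \<in> C" "v = coeff_table f l v'" by blast
  have v'_Avec: "v' \<in> Avec f l" using C v' unfolding A_code_def by blast
  have "coeff_table f l (map (\<lambda>y. ([:c:] * y) mod f) v') (i, j) = c * v (i, j)" for i j
  proof (cases "i < l")
    case True
    then have "([:c:] * v' ! i) mod f = smult c (v' ! i)"
      using Avec_nth[OF v'_Avec True] by (simp add: mod_poly_less le_less_trans[OF degree_smult_le])
    then show ?thesis using True v'_Avec by (simp add: v'(2) coeff_table_def Avec_def)
  qed (simp add: v'(2) coeff_table_def)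
  then have "coeff_table f l (map (\<lambda>y. ([:c:] * y) mod f) v') = (\<lambda>q. c * v q)"
    by (intro ext) (metis surj_pair)
  moreover have "degree [:c:] < degree f" using \<open>0 < degree f\<close> by simp
  then have "map (\<lambda>y. ([:c:] * y) mod f) v' \<in> C"
    using C v'(1) unfolding A_code_def by blast
  ultimately show "(\<lambda>q. c * v q) \<in> coeff_table f l ` C" by (rule image_eqI[OF sym])
qed

lemma Fdual_Fdual:
  assumes "0 < degree f" and C: "A_code f l C"
  shows "Fdual f l (Fdual f l C) = C"
proof
  have C_Avec: "C \<subseteq> Avec f l" using C by (simp add: A_code_def)
  then show "C \<subseteq> Fdual f l (Fdual f l C)" by (auto simp: Fdual_eq coeff_inner_commute)
  show "Fdual f l (Fdual f l C) \<subseteq> C"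
  proof
    fix b assume b: "b \<in> Fdual f l (Fdual f l C)"
    define I where "I = {..<l} \<times> {..<degree f}"
    have "coeff_table f l b \<in> coeff_table f l ` C"
    proof (rule mem_lin_subspace_if_annihilated[of I])
      show "\<forall>w. (\<forall>v\<in>coeff_table f l ` C. (\<Sum>q\<in>I. w q * v q) = 0)
                \<longrightarrow> (\<Sum>q\<in>I. w q * coeff_table f l b q) = 0"
      proof (intro allI impI)
        fix w assume w: "\<forall>v\<in>coeff_table f l ` C. (\<Sum>q\<in>I. w q * v q) = 0"
        have "coeff_inner f l (table_vec f l w) c = (\<Sum>q\<in>I. w q * coeff_table f l c q)" for c
          unfolding coeff_inner_eq_sum_coeff_table I_def[symmetric]
          by (rule sum.cong) (simp_all add: I_def coeff_table_table_vec)
        then have "table_vec f l w \<in> Fdual f l C"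
          using w table_vec_Avec[OF \<open>0 < degree f\<close>] by (simp add: Fdual_eq)
        then have "coeff_inner f l b (table_vec f l w) = 0" using b by (simp add: Fdual_eq)
        then show "(\<Sum>q\<in>I. w q * coeff_table f l b q) = 0"
          unfolding coeff_inner_eq_sum_coeff_table I_def[symmetric]
          by (simp add: I_def coeff_table_table_vec mult.commute)
      qed
      show "\<forall>v\<in>coeff_table f l ` C. \<forall>q. q \<notin> I \<longrightarrow> v q = 0"
        and "\<forall>q. q \<notin> I \<longrightarrow> coeff_table f l b q = 0"
        by (auto simp: I_def coeff_table_def)
    qed (simp_all add: I_def lin_subspace_coeff_table_image[OF assms])
    then obtain c where "c \<in> C" "coeff_table f l c = coeff_table f l b" by auto
    moreover have "b \<in> Avec f l" using b by (simp add: Fdual_eq)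
    ultimately show "b \<in> C" using coeff_table_inj C_Avec by blast
  qed
qed

section \<open>Substituting x^(-1) in F[x]/(x^m + s)\<close>

lemma reflect_poly_eq_sum_monom:
  "reflect_poly p = (\<Sum>i\<le>degree p. monom (coeff p i) (degree p - i))"
proof (rule poly_eqI)
  fix n
  have "(\<Sum>i\<le>degree p. monom (coeff p i) (degree p - i)) = (\<Sum>k\<le>degree p. monom (coeff p (degree p - k)) k)"
    by (rule sum.reindex_bij_witness[where i="\<lambda>k. degree p - k" and j="\<lambda>i. degree p - i"]) auto
  then show "coeff (reflect_poly p) n = coeff (\<Sum>i\<le>degree p. monom (coeff p i) (degree p - i)) n"
    by (simp add: coeff_reflect_poly coeff_sum coeff_monom)
qed

lemma poly_mod_sum_left: "sum g A mod (p :: 'a::field poly) = (\<Sum>i\<in>A. g i mod p)"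
  by (induct A rule: infinite_finite_induct) (simp_all add: poly_mod_add_left)

lemma pcompose_monom: "pcompose (monom c n) q = smult c (q ^ n)"
  by (induct n) (simp_all add: monom_altdef pcompose_smult pcompose_mult pcompose_pCons)

locale binomial_modulus =
  fixes f :: "'a::field poly" and m :: nat and s :: 'a
  assumes m_pos: "0 < m" and s_cases: "s = 1 \<or> s = -1" and f_eq: "f = monom 1 m + [:s:]"
begin

lemma s_mult_s: "s * s = 1"
  using s_cases by auto

lemma degree_f: "degree f = m"
  using m_pos by (simp add: f_eq degree_add_eq_left degree_monom_eq)

lemma f_nonzero: "f \<noteq> 0"
  using degree_f m_pos by auto

lemma mod_f_eq_self: "degree p < m \<Longrightarrow> p mod f = p"
  by (simp add: mod_poly_less degree_f)

lemma degree_mod_f: "degree (p mod f) < m"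
  using degree_mod_less[OF f_nonzero, of p] degree_f m_pos by (cases "p mod f = 0") auto

lemma monom_m_cong: "[monom 1 m = [:-s:]] (mod f)"
proof -
  have "monom 1 m - [:-s:] = f" by (simp add: f_eq)
  then show ?thesis by (simp add: cong_iff_dvd_diff)
qed

definition x_inv :: "'a poly" where
  "x_inv = monom (- s) (m - 1)"

lemma degree_x_inv: "degree x_inv < m"
  using m_pos degree_monom_le[of "- s" "m - 1"] by (simp add: x_inv_def)

lemma monom_mult_x_inv_power_cong: "[monom 1 i * x_inv ^ i = 1] (mod f)"
proof -
  have "monom 1 1 * x_inv - 1 = smult (- s) f"
    using m_pos by (simp add: x_inv_def mult_monom f_eq smult_add_right smult_monom s_mult_s one_pCons)
  then have "f dvd monom 1 1 * x_inv - 1" by (metis dvd_smult dvd_refl)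
  then have "[monom 1 1 * x_inv = 1] (mod f)" by (simp add: cong_iff_dvd_diff)
  from cong_pow[OF this, of i] show ?thesis by (simp add: power_mult_distrib monom_power)
qed

lemma monom_mult_cancel_cong:
  assumes "[monom 1 i * a = monom 1 i * b] (mod f)"
  shows "[a = b] (mod f)"
proof -
  have "[x_inv ^ i * (monom 1 i * a) = x_inv ^ i * (monom 1 i * b)] (mod f)"
    using assms by (rule cong_scalar_left)
  moreover have "[x_inv ^ i * (monom 1 i * c) = c] (mod f)" for c
    using cong_scalar_right[OF monom_mult_x_inv_power_cong, where d = c] by (simp add: ac_simps)
  ultimately show ?thesis by (metis cong_sym cong_trans)
qed

lemma xinv_eq: "xinv f = x_inv"
  unfolding xinv_def
proof (rule the_equality)
  have x_mult: "monom 1 (Suc 0) * p = pCons 0 p" for p :: "'a poly" by (simp add: monom_Suc monom_0)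
  have inv: "[:0, 1:] * x_inv mod f = 1"
    using monom_mult_x_inv_power_cong[of 1] m_pos mod_f_eq_self[of 1] by (simp add: cong_def x_mult)
  then show "degree x_inv < degree f \<and> [:0, 1:] * x_inv mod f = 1"
    using degree_x_inv by (simp add: degree_f)
  fix h assume h: "degree h < degree f \<and> [:0, 1:] * h mod f = 1"
  with inv have "[monom 1 1 * h = monom 1 1 * x_inv] (mod f)" by (simp add: cong_def x_mult)
  then have "[h = x_inv] (mod f)" by (rule monom_mult_cancel_cong)
  then show "h = x_inv" using h degree_x_inv by (simp add: cong_def degree_f mod_f_eq_self)
qed

lemma x_inv_power_mod:
  assumes "i < m"
  shows "x_inv ^ i mod f = (if i = 0 then 1 else monom (- s) (m - i))"
proof (cases "i = 0")
  case False
  have "[monom (- s) m = 1] (mod f)"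
    using cong_scalar_left[OF monom_m_cong, of "[:- s:]"] by (simp add: smult_monom s_mult_s one_pCons)
  moreover have "monom 1 i * monom (- s) (m - i) = monom (- s) m"
    using assms by (simp add: mult_monom)
  ultimately have "[monom 1 i * x_inv ^ i = monom 1 i * monom (- s) (m - i)] (mod f)"
    using monom_mult_x_inv_power_cong by (metis cong_sym cong_trans)
  then have "[x_inv ^ i = monom (- s) (m - i)] (mod f)" by (rule monom_mult_cancel_cong)
  then show ?thesis
    using False m_pos degree_monom_le[of "- s" "m - i"] by (simp add: cong_def mod_f_eq_self)
qed (use m_pos mod_f_eq_self[of 1] in simp)

lemma x_inv_power_m_cong: "[x_inv ^ m = [:- s:]] (mod f)"
proof -
  have "[[:- s:] * x_inv ^ m = monom 1 m * x_inv ^ m] (mod f)"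
    using cong_scalar_right[OF cong_sym[OF monom_m_cong]] .
  with monom_mult_x_inv_power_cong have "[[:- s:] * ([:- s:] * x_inv ^ m) = [:- s:] * 1] (mod f)"
    by (metis cong_scalar_left cong_trans)
  then show ?thesis by (simp add: s_mult_s one_pCons)
qed

lemma f_dvd_pcompose_f: "f dvd pcompose f x_inv"
proof -
  have "pcompose f x_inv = x_inv ^ m + [:s:]" by (simp add: f_eq pcompose_add pcompose_monom)
  moreover have "[x_inv ^ m + [:s:] = [:- s:] + [:s:]] (mod f)"
    by (rule cong_add[OF x_inv_power_m_cong cong_refl])
  ultimately show ?thesis by (simp add: cong_0_iff)
qed

definition inv_subst :: "'a poly \<Rightarrow> 'a poly" where
  "inv_subst e = pcompose e x_inv mod f"

lemma inv_subst_cong: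
  assumes "[p = q] (mod f)"
  shows "inv_subst p = inv_subst q"
proof -
  obtain k where "p - q = f * k" using assms by (auto simp: cong_iff_dvd_diff)
  then have "pcompose p x_inv - pcompose q x_inv = pcompose f x_inv * pcompose k x_inv"
    by (simp add: pcompose_diff[symmetric] pcompose_mult)
  then have "f dvd pcompose p x_inv - pcompose q x_inv" using f_dvd_pcompose_f by simp
  then show ?thesis by (simp add: inv_subst_def cong_iff_dvd_diff[symmetric] cong_def)
qed

lemma inv_subst_mod: "inv_subst (p mod f) = inv_subst p"
  by (rule inv_subst_cong) (simp add: cong_def)

lemma inv_subst_0 [simp]: "inv_subst 0 = 0"
  by (simp add: inv_subst_def)

lemma inv_subst_add: "inv_subst (p + q) = inv_subst p + inv_subst q"
  by (simp add: inv_subst_def pcompose_add poly_mod_add_left)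

lemma inv_subst_smult: "inv_subst (smult c p) = smult c (inv_subst p)"
  by (simp add: inv_subst_def pcompose_smult mod_smult_left)

lemma inv_subst_mult: "inv_subst (p * q) = (inv_subst p * inv_subst q) mod f"
  by (simp add: inv_subst_def pcompose_mult mod_mult_eq)

lemma inv_subst_sum: "inv_subst (sum g A) = (\<Sum>i\<in>A. inv_subst (g i))"
  by (induct A rule: infinite_finite_induct) (simp_all add: inv_subst_add)

lemma degree_inv_subst: "degree (inv_subst p) < m"
  by (simp add: inv_subst_def degree_mod_f)

lemma inv_subst_monom:
  assumes "i < m"
  shows "inv_subst (monom c i) = (if i = 0 then [:c:] else monom (- s * c) (m - i))"
  using x_inv_power_mod[OF assms]
  by (simp add: inv_subst_def pcompose_monom mod_smult_left smult_monom monom_0)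

lemma sum_monoms_below_m: "degree e < m \<Longrightarrow> (\<Sum>i<m. monom (coeff e i) i) = e"
  using poly_as_sum_of_monoms'[of e "m - 1"] m_pos by (simp add: lessThan_Suc_atMost[symmetric])

lemma coeff_inv_subst:
  assumes "degree e < m"
  shows "coeff (inv_subst e) u =
    (if u = 0 then coeff e 0 else if u < m then - s * coeff e (m - u) else 0)"
    (is "_ = ?c")
proof -
  have "coeff (inv_subst e) u = (\<Sum>i<m. coeff (inv_subst (monom (coeff e i) i)) u)"
    using sum_monoms_below_m[OF assms] by (metis coeff_sum inv_subst_sum)
  also have "\<dots> = (\<Sum>i<m. if i = (if u = 0 then 0 else m - u) then ?c else 0)"
    by (rule sum.cong) (auto simp: inv_subst_monom coeff_monom coeff_pCons split: nat.split)
  also have "\<dots> = ?c"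
    using m_pos by (auto simp: sum.delta')
  finally show ?thesis .
qed

lemma inv_subst_inv_subst: "degree e < m \<Longrightarrow> inv_subst (inv_subst e) = e"
  by (rule poly_eqI)
    (auto simp: coeff_inv_subst degree_inv_subst s_mult_s coeff_eq_0 mult.assoc[symmetric])

lemma inv_subst_eq_0_iff: "degree e < m \<Longrightarrow> inv_subst e = 0 \<longleftrightarrow> e = 0"
  by (metis inv_subst_0 inv_subst_inv_subst)

lemma coeff_0_mod_f:
  assumes "degree p < 2 * m"
  shows "coeff (p mod f) 0 = coeff p 0 - s * coeff p m"
proof -
  define q where "q = poly_cutoff m p - smult s (poly_shift m p)"
  have "p = poly_cutoff m p + monom 1 m * poly_shift m p"
    by (rule poly_eqI) (auto simp: coeff_poly_cutoff coeff_monom_mult coeff_poly_shift)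
  also have "[\<dots> = poly_cutoff m p + [:- s:] * poly_shift m p] (mod f)"
    by (intro cong_add cong_mult cong_refl monom_m_cong)
  finally have "[p = q] (mod f)" by (simp add: q_def)
  moreover have "degree q < m"
  proof -
    have "coeff q k = 0" if "m \<le> k" for k
      using that assms coeff_eq_0[of p "k + m"] by (simp add: q_def coeff_poly_cutoff coeff_poly_shift)
    then have "degree q \<le> m - 1" by (intro degree_le) auto
    then show ?thesis using m_pos by linarith
  qed
  ultimately have "p mod f = q" by (metis cong_def mod_f_eq_self)
  then show ?thesis by (simp add: q_def coeff_poly_cutoff coeff_poly_shift m_pos)
qed

lemma coeff_0_mult_mod_f:
  assumes a: "degree a < m" and c: "degree c < m"
  shows "coeff ((a * c) mod f) 0 = (\<Sum>u<m. coeff (inv_subst a) u * coeff c u)"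
proof -
  have "degree (a * c) < 2 * m" using a c degree_mult_le[of a c] by linarith
  then have "coeff ((a * c) mod f) 0 = coeff a 0 * coeff c 0 - s * (\<Sum>i\<le>m. coeff a i * coeff c (m - i))"
    by (simp add: coeff_0_mod_f coeff_mult)
  also have "(\<Sum>i\<le>m. coeff a i * coeff c (m - i)) = (\<Sum>i\<in>{1..<m}. coeff a i * coeff c (m - i))"
  proof -
    have "{..m} = insert 0 (insert m {1..<m})" using m_pos by auto
    then show ?thesis using a c m_pos by (simp add: coeff_eq_0)
  qed
  also have "\<dots> = (\<Sum>u\<in>{1..<m}. coeff a (m - u) * coeff c u)"
    by (rule sum.reindex_bij_witness[where i="\<lambda>u. m - u" and j="\<lambda>u. m - u"]) auto
  also have "coeff a 0 * coeff c 0 - s * \<dots> = (\<Sum>u<m. coeff (inv_subst a) u * coeff c u)"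
  proof -
    have "{..<m} = insert 0 {1..<m}" using m_pos by auto
    then show ?thesis
      by (simp add: coeff_inv_subst[OF a] sum_distrib_left sum_negf mult.assoc)
  qed
  finally show ?thesis .
qed

lemma coeff_0_mult_monom_mod_f:
  assumes "degree e < m" and "j < m"
  shows "coeff ((e * monom 1 j) mod f) 0 = coeff (inv_subst e) j"
  using assms
  by (simp add: coeff_0_mult_mod_f degree_monom_eq coeff_monom if_distrib sum.delta cong: if_cong)

definition inv_subst_vec :: "'a poly list \<Rightarrow> 'a poly list" where
  "inv_subst_vec = map inv_subst"

lemma inv_subst_vec_Avec: "v \<in> Avec f l \<Longrightarrow> inv_subst_vec v \<in> Avec f l"
  unfolding Avec_def inv_subst_vec_def by (simp add: degree_f degree_inv_subst)

lemma inv_subst_vec_inv_subst_vec: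
  assumes "v \<in> Avec f l" shows "inv_subst_vec (inv_subst_vec v) = v"
proof -
  have "\<forall>x\<in>set v. degree x < m" using assms by (simp add: Avec_def degree_f)
  then show ?thesis unfolding inv_subst_vec_def map_map by (intro map_idI) (simp add: inv_subst_inv_subst)
qed

lemma coeff_inner_inv_subst_vec:
  assumes a: "a \<in> Avec f l" and c: "c \<in> Avec f l"
  shows "coeff_inner f l (inv_subst_vec a) c = coeff ((\<Sum>i<l. a ! i * c ! i) mod f) 0"
proof -
  have "coeff_inner f l (inv_subst_vec a) c = (\<Sum>i<l. coeff ((a ! i * c ! i) mod f) 0)"
    unfolding coeff_inner_def
  proof (intro sum.cong refl)
    fix i assume "i \<in> {..<l}"
    then have "degree (a ! i) < m" "degree (c ! i) < m" "i < length a"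
      using Avec_nth[OF a] Avec_nth[OF c] a by (auto simp: degree_f Avec_def)
    then show "(\<Sum>j<degree f. coeff (inv_subst_vec a ! i) j * coeff (c ! i) j)
        = coeff ((a ! i * c ! i) mod f) 0"
      by (simp add: inv_subst_vec_def degree_f coeff_0_mult_mod_f)
  qed
  also have "\<dots> = coeff ((\<Sum>i<l. a ! i * c ! i) mod f) 0"
    by (simp add: coeff_sum poly_mod_sum_left)
  finally show ?thesis .
qed

lemma coeff_inner_inv_subst_vec_swap:
  assumes a: "a \<in> Avec f l" and c: "c \<in> Avec f l"
  shows "coeff_inner f l a (inv_subst_vec c) = coeff_inner f l (inv_subst_vec a) c"
  using coeff_inner_inv_subst_vec[OF a c] coeff_inner_inv_subst_vec[OF c a]
  by (simp add: coeff_inner_commute mult.commute)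

lemma coeff_inner_inv_subst_vec_monom_mult:
  assumes a: "a \<in> Avec f l" and c: "c \<in> Avec f l" and "j < m"
  shows "coeff_inner f l (inv_subst_vec a) (map (\<lambda>y. (monom 1 j * y) mod f) c)
    = coeff (inv_subst ((\<Sum>i<l. a ! i * c ! i) mod f)) j"
proof -
  define c' where "c' = map (\<lambda>y. (monom 1 j * y) mod f) c"
  have "length c = l" using c by (simp add: Avec_def)
  then have c'_Avec: "c' \<in> Avec f l" by (simp add: Avec_def c'_def degree_f degree_mod_f)
  have "[(\<Sum>i<l. a ! i * c' ! i) = (\<Sum>i<l. a ! i * (monom 1 j * c ! i))] (mod f)"
    using \<open>length c = l\<close> by (intro cong_sum) (simp add: c'_def cong_def mod_mult_right_eq)
  moreover have "(\<Sum>i<l. a ! i * (monom 1 j * c ! i)) = (\<Sum>i<l. a ! i * c ! i) * monom 1 j"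
    by (subst sum_distrib_right) (simp add: mult_ac)
  ultimately have "coeff ((\<Sum>i<l. a ! i * c' ! i) mod f) 0
      = coeff (((\<Sum>i<l. a ! i * c ! i) mod f * monom 1 j) mod f) 0"
    by (simp add: cong_def mod_mult_left_eq)
  then show ?thesis
    using coeff_inner_inv_subst_vec[OF a c'_Avec] \<open>j < m\<close>
    by (simp add: c'_def coeff_0_mult_monom_mod_f degree_mod_f)
qed

lemma mem_dual_iff:
  assumes C: "A_code f l C" and a: "a \<in> Avec f l"
  shows "a \<in> dual f l C \<longleftrightarrow> inv_subst_vec a \<in> Fdual f l C"
proof
  have C_Avec: "C \<subseteq> Avec f l" using C by (simp add: A_code_def)
  assume "a \<in> dual f l C"
  then have "coeff_inner f l (inv_subst_vec a) c = 0" if "c \<in> C" for c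
    using that coeff_inner_inv_subst_vec[OF a subsetD[OF C_Avec that]] by (simp add: dual_def)
  then show "inv_subst_vec a \<in> Fdual f l C" using inv_subst_vec_Avec[OF a] by (simp add: Fdual_eq)
next
  assume a_Fdual: "inv_subst_vec a \<in> Fdual f l C"
  have "(\<Sum>i<l. a ! i * c ! i) mod f = 0" if c: "c \<in> C" for c
  proof -
    define H where "H = (\<Sum>i<l. a ! i * c ! i) mod f"
    have c_Avec: "c \<in> Avec f l" using C c by (simp add: A_code_def subset_iff)
    have "coeff (inv_subst H) j = 0" for j
    proof (cases "j < m")
      case True
      then have "map (\<lambda>y. (monom 1 j * y) mod f) c \<in> C"
        using C c by (simp add: A_code_def degree_f degree_monom_eq)
      with a_Fdual True show ?thesis
        using coeff_inner_inv_subst_vec_monom_mult[OF a c_Avec True] by (simp add: Fdual_eq H_def)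
    qed (use degree_inv_subst[of H] in \<open>simp add: coeff_eq_0\<close>)
    then have "inv_subst H = 0" by (simp add: poly_eq_iff)
    then show ?thesis using inv_subst_eq_0_iff[OF degree_mod_f] by (simp only: H_def)
  qed
  with a show "a \<in> dual f l C" by (simp add: dual_def)
qed

lemma Fdual_dual_eq:
  assumes C: "A_code f l C"
  shows "Fdual f l (dual f l C) = inv_subst_vec ` C"
proof
  show "Fdual f l (dual f l C) \<subseteq> inv_subst_vec ` C"
  proof
    fix b assume b: "b \<in> Fdual f l (dual f l C)"
    then have b_Avec: "b \<in> Avec f l" by (simp add: Fdual_eq)
    have "coeff_inner f l (inv_subst_vec b) a = 0" if a: "a \<in> Fdual f l C" for a
    proof -
      have a_Avec: "a \<in> Avec f l" using a by (simp add: Fdual_eq)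
      then have "inv_subst_vec a \<in> dual f l C"
        using a mem_dual_iff[OF C inv_subst_vec_Avec] by (simp add: inv_subst_vec_inv_subst_vec)
      with b have "coeff_inner f l b (inv_subst_vec a) = 0" by (simp add: dual_def Fdual_eq)
      then show ?thesis by (simp add: coeff_inner_inv_subst_vec_swap[OF b_Avec a_Avec])
    qed
    then have "inv_subst_vec b \<in> Fdual f l (Fdual f l C)"
      using inv_subst_vec_Avec[OF b_Avec] by (simp add: Fdual_eq)
    then have "inv_subst_vec b \<in> C" using Fdual_Fdual[OF _ C] m_pos by (simp add: degree_f)
    then show "b \<in> inv_subst_vec ` C" using inv_subst_vec_inv_subst_vec[OF b_Avec] by force
  qed
  show "inv_subst_vec ` C \<subseteq> Fdual f l (dual f l C)"
  proof
    fix b assume "b \<in> inv_subst_vec ` C"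
    then obtain c where c: "c \<in> C" "b = inv_subst_vec c" by blast
    then have c_Avec: "c \<in> Avec f l" using C by (simp add: A_code_def subset_iff)
    have "coeff_inner f l b a = 0" if a: "a \<in> dual f l C" for a
    proof -
      have a_Avec: "a \<in> Avec f l" using a by (simp add: dual_def)
      then have "inv_subst_vec a \<in> Fdual f l C" using a mem_dual_iff[OF C] by blast
      then have "coeff_inner f l (inv_subst_vec a) c = 0" using c by (simp add: Fdual_eq)
      then show ?thesis
        using coeff_inner_inv_subst_vec_swap[OF a_Avec c_Avec] by (simp add: c coeff_inner_commute)
    qed
    then show "b \<in> Fdual f l (dual f l C)" using c inv_subst_vec_Avec[OF c_Avec] by (simp add: Fdual_eq)
  qed
qed

subsection \<open>Transfer of leading elements\<close>

lemma inv_subst_vec_eq_0_iff: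
  "v \<in> Avec f l \<Longrightarrow> \<forall>x\<in>set v. inv_subst x = 0 \<longleftrightarrow> x = 0"
  unfolding Avec_def by (simp add: inv_subst_eq_0_iff degree_f)

lemma Lind_inv_subst_vec: "v \<in> Avec f l \<Longrightarrow> Lind (inv_subst_vec v) = Lind v"
  unfolding inv_subst_vec_def by (rule Lind_map_eq[OF inv_subst_vec_eq_0_iff])

lemma Lcoef_inv_subst_vec: "v \<in> Avec f l \<Longrightarrow> Lcoef (inv_subst_vec v) = inv_subst (Lcoef v)"
  unfolding inv_subst_vec_def by (rule Lcoef_map_eq[OF inv_subst_vec_eq_0_iff]) simp_all

lemma Lind_code_inv_subst_vec_image:
  "Y \<subseteq> Avec f l \<Longrightarrow> Lind_code (inv_subst_vec ` Y) = Lind_code Y"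
  unfolding Lind_code_def image_image by (rule INF_cong) (auto simp: Lind_inv_subst_vec)

lemma nonzero_code_inv_subst_vec_image:
  "Y \<subseteq> Avec f l \<Longrightarrow> nonzero_code (inv_subst_vec ` Y) \<longleftrightarrow> nonzero_code Y"
  unfolding nonzero_code_def using Lind_inv_subst_vec by fastforce

lemma code_seq_inv_subst_vec_image:
  assumes "C \<subseteq> Avec f l"
  shows "code_seq (inv_subst_vec ` C) j = inv_subst_vec ` code_seq C j"
proof (induct j)
  case (Suc j)
  have "code_seq C j \<subseteq> Avec f l" using code_seq_subset assms by blast
  with Suc show ?case by (auto simp: Lind_code_inv_subst_vec_image Lind_inv_subst_vec)
qed simp

lemma monom_mult_inv_subst_mod_f:
  assumes "degree p < m"
  shows "(monom 1 (degree p) * inv_subst p) mod f = reflect_poly p"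
proof -
  define d where "d = degree p"
  have "pcompose p x_inv = (\<Sum>i\<le>d. smult (coeff p i) (x_inv ^ i))"
    unfolding d_def by (subst (1) poly_as_sum_of_monoms[symmetric]) (simp add: pcompose_sum pcompose_monom)
  moreover have "monom 1 d * smult (coeff p i) (x_inv ^ i) = monom (coeff p i) (d - i) * (monom 1 i * x_inv ^ i)"
    if "i \<le> d" for i
    using that by (simp add: mult.assoc[symmetric] mult_monom mult_smult_left[symmetric] smult_monom)
  ultimately have "monom 1 d * pcompose p x_inv = (\<Sum>i\<le>d. monom (coeff p i) (d - i) * (monom 1 i * x_inv ^ i))"
    by (simp add: sum_distrib_left)
  also have "[\<dots> = (\<Sum>i\<le>d. monom (coeff p i) (d - i) * 1)] (mod f)"
    by (intro cong_sum cong_scalar_left monom_mult_x_inv_power_cong)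
  also have "(\<Sum>i\<le>d. monom (coeff p i) (d - i) * 1) = reflect_poly p"
    by (simp add: reflect_poly_eq_sum_monom d_def)
  finally have "(monom 1 d * pcompose p x_inv) mod f = reflect_poly p mod f" by (simp add: cong_def)
  then show ?thesis
    using assms degree_reflect_poly_le[of p]
    by (simp add: d_def inv_subst_def mod_mult_right_eq mod_f_eq_self)
qed

lemma degree_Lcoef_less:
  assumes "v \<in> Avec f l" shows "degree (Lcoef v) < m"
proof (cases "\<exists>i<length v. v ! i \<noteq> 0")
  case True
  then have "(LEAST i. i < length v \<and> v ! i \<noteq> 0) < length v" by (rule LeastI2_ex) auto
  with True assms show ?thesis unfolding Lcoef_def Avec_def degree_f using nth_mem by auto
qed (use m_pos in \<open>auto simp: Lcoef_def\<close>)

lemma leading_element_facts: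
  assumes "Y \<subseteq> Avec f l" and "leading_element Y g" and "Lind_code Y = enat p"
  shows "g \<in> Y" and "Lind g = enat p" and "p < l" and "Lcoef g = g ! p" and "lead_coeff (Lcoef g) = 1"
proof -
  show "g \<in> Y" "Lind g = enat p" "lead_coeff (Lcoef g) = 1"
    using assms by (simp_all add: leading_element_def is_Lcoef_code_def)
  then show "p < l" "Lcoef g = g ! p"
    using assms(1) by (auto simp: Lind_eq_enat_iff Lcoef_eq_nth Avec_def)
qed

lemma coeff_0_Lcoef_leading_element_nonzero:
  assumes Y: "Y \<subseteq> Avec f l" "A_mult_closed f Y" and g: "leading_element Y g"
    and p: "Lind_code Y = enat p"
  shows "coeff (Lcoef g) 0 \<noteq> 0"
proof
  assume coeff_0: "coeff (Lcoef g) 0 = 0"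
  note g_facts = leading_element_facts[OF Y(1) g p]
  define g1 where "g1 = poly_shift 1 (Lcoef g)"
  have g1: "Lcoef g = monom 1 1 * g1"
    using coeff_0 by (intro poly_eqI) (auto simp: g1_def coeff_monom_mult coeff_poly_shift)
  have "g1 \<noteq> 0" using g1 g_facts(5) by auto
  then have deg_g1: "degree g1 < degree (Lcoef g)" by (simp add: g1 degree_mult_eq degree_monom_eq)
  define w where "w = map (\<lambda>y. (x_inv * y) mod f) g"
  have "w \<in> Y" using Y(2) g_facts(1) degree_x_inv by (simp add: A_mult_closed_def w_def degree_f)
  have "[x_inv * Lcoef g = g1] (mod f)"
    using cong_scalar_right[OF monom_mult_x_inv_power_cong[of 1], of g1] by (simp add: g1 ac_simps)
  moreover have "degree g1 < m" using deg_g1 degree_Lcoef_less Y(1) g_facts(1) by fastforce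
  ultimately have "w ! p = g1"
    using g_facts Y(1) by (auto simp: w_def Avec_def cong_def mod_f_eq_self)
  then have "degree (Lcoef g) \<le> degree g1"
    using degree_Lcoef_leading_element_le[OF Y g p \<open>w \<in> Y\<close>] \<open>g1 \<noteq> 0\<close> by simp
  with deg_g1 show False by simp
qed

lemma recip_row_eq:
  "recip_row f g = map (\<lambda>e. smult (inverse (coeff (Lcoef g) 0))
      ((monom 1 (degree (Lcoef g)) * inv_subst e) mod f)) g"
  by (simp add: recip_row_def Let_def xinv_eq inv_subst_def mod_mult_right_eq)

lemma recip_row_mem_image:
  assumes "A_mult_closed f Y" and "g \<in> Y" and "degree (Lcoef g) < m"
  shows "recip_row f g \<in> inv_subst_vec ` Y"
proof -
  define \<beta> where "\<beta> = smult (inverse (coeff (Lcoef g) 0)) (inv_subst (monom 1 (degree (Lcoef g))))"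
  define w where "w = map (\<lambda>y. (\<beta> * y) mod f) g"
  have "degree \<beta> < degree f"
    using degree_inv_subst le_less_trans[OF degree_smult_le] m_pos by (simp add: \<beta>_def degree_f)
  then have "w \<in> Y" using assms(1,2) unfolding A_mult_closed_def w_def by blast
  moreover have "inv_subst_vec w = recip_row f g"
    using assms(3) by (simp add: recip_row_eq inv_subst_vec_def w_def \<beta>_def inv_subst_mod inv_subst_mult
        inv_subst_smult inv_subst_inv_subst degree_monom_le le_less_trans[OF degree_monom_le] mod_smult_left)
  ultimately show ?thesis by (metis image_eqI)
qed

lemma
  assumes g: "g \<in> Avec f l" and \<alpha>: "coeff (Lcoef g) 0 \<noteq> 0"
  shows Lind_recip_row: "Lind (recip_row f g) = Lind g"
    and Lcoef_recip_row:
      "Lcoef (recip_row f g) = smult (inverse (coeff (Lcoef g) 0)) (reflect_poly (Lcoef g))"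
proof -
  define \<phi> where "\<phi> e = smult (inverse (coeff (Lcoef g) 0)) ((monom 1 (degree (Lcoef g)) * inv_subst e) mod f)"
    for e
  have rr: "recip_row f g = map \<phi> g" by (simp add: recip_row_eq \<phi>_def)
  have nz: "\<forall>x\<in>set g. \<phi> x = 0 \<longleftrightarrow> x = 0"
  proof
    fix x assume "x \<in> set g"
    then have deg_x: "degree x < m" using g by (simp add: Avec_def degree_f)
    have "\<phi> x = 0 \<longleftrightarrow> [monom 1 (degree (Lcoef g)) * inv_subst x = monom 1 (degree (Lcoef g)) * 0] (mod f)"
      using \<alpha> by (simp add: \<phi>_def cong_def)
    also have "\<dots> \<longleftrightarrow> [inv_subst x = 0] (mod f)"
      using monom_mult_cancel_cong cong_scalar_left by blast
    also have "\<dots> \<longleftrightarrow> x = 0"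
      using degree_inv_subst inv_subst_eq_0_iff[OF deg_x] by (simp add: cong_def mod_f_eq_self)
    finally show "\<phi> x = 0 \<longleftrightarrow> x = 0" .
  qed
  show "Lind (recip_row f g) = Lind g" by (simp add: rr Lind_map_eq[OF nz])
  have "\<phi> 0 = 0" by (simp add: \<phi>_def)
  then have "Lcoef (recip_row f g) = \<phi> (Lcoef g)" by (simp add: rr Lcoef_map_eq[OF nz])
  then show "Lcoef (recip_row f g) = smult (inverse (coeff (Lcoef g) 0)) (reflect_poly (Lcoef g))"
    using monom_mult_inv_subst_mod_f[OF degree_Lcoef_less[OF g]] by (simp add: \<phi>_def)
qed

lemma degree_Lcoef_leading_element_le_image:
  assumes Y: "Y \<subseteq> Avec f l" "A_mult_closed f Y" and g: "leading_element Y g"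
    and p: "Lind_code Y = enat p" and c: "c \<in> inv_subst_vec ` Y" "Lind c = enat p"
  shows "degree (Lcoef g) \<le> degree (Lcoef c)"
proof -
  obtain v where v: "v \<in> Y" "c = inv_subst_vec v" using c(1) by blast
  then have v_Avec: "v \<in> Avec f l" using Y(1) by blast
  then have "Lind v = enat p" using c(2) v(2) Lind_inv_subst_vec by simp
  then have "p < length v" "v ! p \<noteq> 0" and Lcoef_v: "Lcoef v = v ! p"
    by (simp_all add: Lind_eq_enat_iff Lcoef_eq_nth)
  define q where "q = Lcoef c"
  have deg_vp: "degree (v ! p) < m" using v_Avec \<open>p < length v\<close> by (simp add: Avec_def degree_f)
  have q: "q = inv_subst (v ! p)" using Lcoef_inv_subst_vec[OF v_Avec] v(2) Lcoef_v by (simp add: q_def)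
  then have "q \<noteq> 0" using inv_subst_eq_0_iff[OF deg_vp] \<open>v ! p \<noteq> 0\<close> by simp
  define w where "w = map (\<lambda>y. (monom 1 (degree q) * y) mod f) v"
  have "degree (monom (1::'a) (degree q)) < degree f"
    using degree_inv_subst by (simp add: q degree_monom_eq degree_f)
  then have "w \<in> Y" using Y(2) v(1) unfolding A_mult_closed_def w_def by blast
  moreover have wp: "w ! p = reflect_poly q"
    using \<open>p < length v\<close> monom_mult_inv_subst_mod_f[of q] degree_inv_subst
    by (simp add: w_def q inv_subst_inv_subst[OF deg_vp])
  moreover have "w ! p \<noteq> 0" using wp \<open>q \<noteq> 0\<close> by simp
  ultimately have "degree (Lcoef g) \<le> degree (reflect_poly q)"
    using degree_Lcoef_leading_element_le[OF Y g p] by metis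
  then show ?thesis using degree_reflect_poly_le[of q] by (simp add: q_def)
qed

lemma leading_element_inv_subst_vec_image:
  assumes Y: "Y \<subseteq> Avec f l" "A_mult_closed f Y" and "nonzero_code Y" and g: "leading_element Y g"
  shows "leading_element (inv_subst_vec ` Y) (recip_row f g)"
proof -
  obtain p where p: "Lind_code Y = enat p" using Lind_code_eq_enat[OF \<open>nonzero_code Y\<close>] .
  note g_facts = leading_element_facts[OF Y(1) g p]
  have g_Avec: "g \<in> Avec f l" using g_facts(1) Y(1) by blast
  have \<alpha>: "coeff (Lcoef g) 0 \<noteq> 0" by (rule coeff_0_Lcoef_leading_element_nonzero[OF Y g p])
  have Lind_r: "Lind (recip_row f g) = Lind_code (inv_subst_vec ` Y)"
    using Lind_recip_row[OF g_Avec \<alpha>] g_facts(2) p Lind_code_inv_subst_vec_image[OF Y(1)] by simp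
  have deg_r: "degree (Lcoef (recip_row f g)) = degree (Lcoef g)"
    and monic_r: "lead_coeff (Lcoef (recip_row f g)) = 1"
    using \<alpha> by (simp_all add: Lcoef_recip_row[OF g_Avec \<alpha>] coeff_reflect_poly)
  have "recip_row f g \<in> inv_subst_vec ` Y"
    using recip_row_mem_image[OF Y(2) g_facts(1) degree_Lcoef_less[OF g_Avec]] .
  moreover have "degree (Lcoef (recip_row f g)) \<le> degree (Lcoef c)"
    if "c \<in> inv_subst_vec ` Y" "Lind c = Lind_code (inv_subst_vec ` Y)" for c
    using degree_Lcoef_leading_element_le_image[OF Y g p that(1)] that(2) deg_r p
      Lind_code_inv_subst_vec_image[OF Y(1)] by simp
  ultimately show ?thesis
    using Lind_r monic_r by (auto simp: leading_element_def is_Lcoef_code_def)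
qed

lemma basis_of_divisors_inv_subst_vec_image:
  assumes C: "A_code f l C" and gs: "basis_of_divisors C gs"
  shows "basis_of_divisors (inv_subst_vec ` C) (map (recip_row f) gs)"
proof -
  have C_Avec: "C \<subseteq> Avec f l" using C by (simp add: A_code_def)
  then have seq_Avec: "code_seq C j \<subseteq> Avec f l" for j using code_seq_subset by blast
  have seq_closed: "A_mult_closed f (code_seq C j)" for j
    using A_mult_closed_code_seq[OF A_code_imp_A_mult_closed[OF C]] .
  from gs show ?thesis
    unfolding basis_of_divisors_def code_seq_inv_subst_vec_image[OF C_Avec]
    using leading_element_inv_subst_vec_image[OF seq_Avec seq_closed]
      nonzero_code_inv_subst_vec_image[OF seq_Avec]
    by auto
qed

end

theorem mainTheorem16:
  fixes f :: "'a::{field,finite} poly" and m l :: nat and s :: 'a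
    and C :: "'a poly list set" and gs :: "'a poly list list"
  assumes "0 < m"
    and "s = 1 \<or> s = -1"
    and "f = monom 1 m + [:s:]"
    and "A_code f l C"
    and "basis_of_divisors C gs"
  shows "basis_of_divisors (Fdual f l (dual f l C)) (map (recip_row f) gs)"
proof -
  interpret binomial_modulus f m s using assms(1-3) by unfold_locales
  show ?thesis
    unfolding Fdual_dual_eq[OF assms(4)]
    by (rule basis_of_divisors_inv_subst_vec_image[OF assms(4,5)])
qed

end
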